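(* Let $n$ individuals be connected by a directed graph with edge set $E\subseteq[n]\times[n]$ (self-loops allowed), with in-neighborhoods $\mathcal{N}_i=\{j:(j,i)\in E\}$, and let $d=\max\{d_{\mathrm{in}},d_{\mathrm{out}}\}$ be the maximum of the maximum in-degree and maximum out-degree. Suppose the potential outcomes have polynomial degree at most $\beta$: for every $i$ and $\mathbf z\in\{0,1\}^n$, $$Y_i(\mathbf z)=\sum_{\mathcal S\subseteq\mathcal N_i,\ |\mathcal S|\le\beta} c_{i,\mathcal S}\prod_{j\in\mathcal S} z_j,$$ and let $Y_{\max}=\max_i\sum_{\mathcal S\subseteq\mathcal N_i,|\mathcal S|\le\beta}|c_{i,\mathcal S}|$. Let $\mathrm{TTE}=\frac1n\sum_{i=1}^n\big(Y_i(\mathbf 1)-Y_i(\mathbf 0)\big)$. Consider a staggered rollout Bernoulli design with treatment probabilities $0=p_0<p_1<\dots<p_\beta\le 1$: sample $u_i\sim U[0,1]$ independently and set $z_i^t=\mathbb I(u_i\le p_t)$ for $t=0,\dots,\beta$. Suppose one observes $Y^{\mathrm{obs}}_{i,t}=Y_i(\mathbf z^t)+\varepsilon_{i,t}$ with $\varepsilon_{i,t}$ i.i.d. $N(0,\sigma^2)$, independent of the treatments. Define the estimator $$\widehat{\mathrm{TTE}}_{\mathrm{PI}}(\mathbf p)=\sum_{t=0}^{\beta}\big(\ell_{t,\mathbf p}(1)-\ell_{t,\mathbf p}(0)\big)\Big(\frac1n\sum_{i=1}^n Y^{\mathrm{obs}}_{i,t}\Big),\qquad \ell_{t,\mathbf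 p}(x)=\prod_{s\ne t}\frac{x-p_s}{p_t-p_s},$$ and $\Delta_{\mathbf p}=\min_{1\le t\le\beta}(p_t-p_{t-1})$. Then $\widehat{\mathrm{TTE}}_{\mathrm{PI}}(\mathbf p)$ is an unbiased estimator of $\mathrm{TTE}$, and its variance is $$O\Big(\tfrac{d^2\beta^2}{n}Y_{\max}^2\Delta_{\mathbf p}^{-2\beta}+\tfrac{\sigma^2\beta}{n}\Delta_{\mathbf p}^{-2\beta}\Big).$$
   Context: $\ell_{t,\mathbf p}$ are the Lagrange interpolation basis polynomials for the nodes $p_0,\dots,p_\beta$. The $O(\cdot)$ hides an absolute constant. *)

theory Defs
  imports "HOL-Probability.Probability"
begin

definition in_nbhd :: "(nat \<times> nat) set \<Rightarrow> nat \<Rightarrow> nat set" where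
  "in_nbhd E i = {j. (j, i) \<in> E}"

definition out_nbhd :: "(nat \<times> nat) set \<Rightarrow> nat \<Rightarrow> nat set" where
  "out_nbhd E i = {j. (i, j) \<in> E}"

definition max_degree :: "nat \<Rightarrow> (nat \<times> nat) set \<Rightarrow> nat" where
  "max_degree n E = max (Max ((\<lambda>i. card (in_nbhd E i)) ` {..<n}))
                         (Max ((\<lambda>i. card (out_nbhd E i)) ` {..<n}))"

definition Ypot :: "(nat \<times> nat) set \<Rightarrow> nat \<Rightarrow> (nat \<Rightarrow> nat set \<Rightarrow> real) \<Rightarrow> nat \<Rightarrow> (nat \<Rightarrow> real) \<Rightarrow> real" where
  "Ypot E \<beta> c i z = (\<Sum>S\<in>{S. S \<subseteq> in_nbhd E i \<and> card S \<le> \<beta>}. c i S * (\<Prod>j\<in>S. z j))"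

definition Ymax :: "nat \<Rightarrow> (nat \<times> nat) set \<Rightarrow> nat \<Rightarrow> (nat \<Rightarrow> nat set \<Rightarrow> real) \<Rightarrow> real" where
  "Ymax n E \<beta> c = Max ((\<lambda>i. \<Sum>S\<in>{S. S \<subseteq> in_nbhd E i \<and> card S \<le> \<beta>}. \<bar>c i S\<bar>) ` {..<n})"

definition TTE :: "nat \<Rightarrow> (nat \<times> nat) set \<Rightarrow> nat \<Rightarrow> (nat \<Rightarrow> nat set \<Rightarrow> real) \<Rightarrow> real" where
  "TTE n E \<beta> c = (1 / real n) * (\<Sum>i<n. Ypot E \<beta> c i (\<lambda>_. 1) - Ypot E \<beta> c i (\<lambda>_. 0))"

definition lagrange :: "(nat \<Rightarrow> real) \<Rightarrow> nat \<Rightarrow> nat \<Rightarrow> real \<Rightarrow> real" where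
  "lagrange p \<beta> t x = (\<Prod>s\<in>{..\<beta>} - {t}. (x - p s) / (p t - p s))"

definition delta_p :: "(nat \<Rightarrow> real) \<Rightarrow> nat \<Rightarrow> real" where
  "delta_p p \<beta> = Min ((\<lambda>t. p t - p (t - 1)) ` {1..\<beta>})"

definition noise_dist :: "real \<Rightarrow> real measure" where
  "noise_dist \<sigma> = (if \<sigma> = 0 then return lborel 0 else density lborel (normal_density 0 \<sigma>))"

definition design_measure :: "nat \<Rightarrow> nat \<Rightarrow> real \<Rightarrow> ((nat \<Rightarrow> real) \<times> (nat \<times> nat \<Rightarrow> real)) measure" where
  "design_measure n \<beta> \<sigma> =
     (PiM {..<n} (\<lambda>_. uniform_measure lborel {0..1::real}))
     \<Otimes>\<^sub>M (PiM ({..<n} \<times> {..\<beta>}) (\<lambda>_. noise_dist \<sigma>))"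

definition treat :: "(nat \<Rightarrow> real) \<Rightarrow> (nat \<Rightarrow> real) \<Rightarrow> nat \<Rightarrow> nat \<Rightarrow> real" where
  "treat p u t i = (if u i \<le> p t then 1 else 0)"

definition Yobs :: "(nat \<times> nat) set \<Rightarrow> nat \<Rightarrow> (nat \<Rightarrow> nat set \<Rightarrow> real) \<Rightarrow> (nat \<Rightarrow> real)
    \<Rightarrow> (nat \<Rightarrow> real) \<times> (nat \<times> nat \<Rightarrow> real) \<Rightarrow> nat \<Rightarrow> nat \<Rightarrow> real" where
  "Yobs E \<beta> c p \<omega> i t = Ypot E \<beta> c i (treat p (fst \<omega>) t) + snd \<omega> (i, t)"

definition est_PI :: "nat \<Rightarrow> (nat \<times> nat) set \<Rightarrow> nat \<Rightarrow> (nat \<Rightarrow> nat set \<Rightarrow> real) \<Rightarrow> (nat \<Rightarrow> real)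
    \<Rightarrow> (nat \<Rightarrow> real) \<times> (nat \<times> nat \<Rightarrow> real) \<Rightarrow> real" where
  "est_PI n E \<beta> c p \<omega> =
     (\<Sum>t\<le>\<beta>. (lagrange p \<beta> t 1 - lagrange p \<beta> t 0) * ((1 / real n) * (\<Sum>i<n. Yobs E \<beta> c p \<omega> i t)))"

end

theory Submission
  imports Defs "HOL-Computational_Algebra.Polynomial"
begin

(*
  For a constant treatment level x, the potential outcome of unit i is the polynomial
  F_i(x) = sum_S c_{i,S} x^|S| of degree at most beta. Since the u_j are independent with
  P(u_j <= p_t) = p_t, the expected outcome of unit i in round t is F_i(p_t). The estimator
  applies to these values the functional f |-> sum_t (l_t(1) - l_t(0)) f(p_t), which is exact
  on polynomials of degree at most beta; hence it is unbiased. Every weight l_t(1) - l_t(0)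
  is bounded by 2 Delta^-beta.

  The treatment part of the estimator is the average of unit estimators that depend only on
  the coordinates u_j with j in the in-neighbourhood of the unit. Two of them are
  uncorrelated unless the neighbourhoods meet, which happens for at most n d^2 pairs; this
  bounds the variance by O(d^2 beta^2 Ymax^2 / (n Delta^(2 beta))). The noise part is a
  weighted sum of independent centred variables with variance sigma^2 sum_t w_t^2 / n.
*)

lemma indep_vars_PiM_coordinates:
  assumes "prob_space D"
  shows "prob_space.indep_vars (PiM I (\<lambda>_. D)) (\<lambda>_. D) (\<lambda>i \<omega>. \<omega> i) I"
proof -
  interpret D: prob_space D by fact
  interpret P: product_prob_space "\<lambda>_. D" I by unfold_locales
  show ?thesis
  proof (cases "I = {}")
    case True
    then show ?thesis unfolding P.indep_vars_def2 P.indep_sets_def by auto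
  next
    case False
    have "distr (PiM I (\<lambda>_. D)) (PiM I (\<lambda>_. D)) (\<lambda>x. \<lambda>i\<in>I. x i)
        = distr (PiM I (\<lambda>_. D)) (PiM I (\<lambda>_. D)) (\<lambda>x. x)"
      by (rule distr_cong) (auto simp: space_PiM PiE_def extensional_restrict)
    then show ?thesis
      using False P.PiM_component
      by (subst P.indep_vars_iff_distr_eq_PiM') (auto intro!: PiM_cong)
  qed
qed

lemma
  fixes g :: "'a \<Rightarrow> real"
  assumes D: "prob_space D" and j: "j \<in> I" and g: "g \<in> borel_measurable D"
  shows integral_PiM_coordinate: "(\<integral>\<omega>. g (\<omega> j) \<partial>PiM I (\<lambda>_. D)) = (\<integral>x. g x \<partial>D)"
    and integrable_PiM_coordinate_iff:
      "integrable (PiM I (\<lambda>_. D)) (\<lambda>\<omega>. g (\<omega> j)) \<longleftrightarrow> integrable D g"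
proof -
  have distr: "distr (PiM I (\<lambda>_. D)) D (\<lambda>\<omega>. \<omega> j) = D"
    using distr_PiM_component[of I "\<lambda>_. D" j] D j by simp
  have meas: "(\<lambda>\<omega>. \<omega> j) \<in> measurable (PiM I (\<lambda>_. D)) D"
    using j by measurable
  show "(\<integral>\<omega>. g (\<omega> j) \<partial>PiM I (\<lambda>_. D)) = (\<integral>x. g x \<partial>D)"
    and "integrable (PiM I (\<lambda>_. D)) (\<lambda>\<omega>. g (\<omega> j)) \<longleftrightarrow> integrable D g"
    using integral_distr[OF meas g] integrable_distr_eq[OF meas g] by (simp_all add: distr)
qed

lemma
  fixes g :: "'i \<Rightarrow> 'a \<Rightarrow> real"
  assumes D: "prob_space D" and S: "finite S" "S \<subseteq> I"
    and g: "\<And>j. j \<in> S \<Longrightarrow> integrable D (g j)"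
  shows integral_PiM_prod_coordinates:
      "(\<integral>\<omega>. (\<Prod>j\<in>S. g j (\<omega> j)) \<partial>PiM I (\<lambda>_. D)) = (\<Prod>j\<in>S. \<integral>x. g j x \<partial>D)"
    and integrable_PiM_prod_coordinates:
      "integrable (PiM I (\<lambda>_. D)) (\<lambda>\<omega>. \<Prod>j\<in>S. g j (\<omega> j))"
proof -
  interpret P: prob_space "PiM I (\<lambda>_. D)"
    using D by (simp add: prob_space_PiM)
  have indep: "P.indep_vars (\<lambda>_. borel) (\<lambda>j \<omega>. g j (\<omega> j)) S"
    using g by (intro P.indep_vars_compose2[OF P.indep_vars_subset[OF
          indep_vars_PiM_coordinates[OF D] S(2)]]) auto
  have int: "integrable (PiM I (\<lambda>_. D)) (\<lambda>\<omega>. g j (\<omega> j))" if "j \<in> S" for j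
    using integrable_PiM_coordinate_iff[OF D, of j I "g j"] g that S by auto
  have "(\<integral>\<omega>. g j (\<omega> j) \<partial>PiM I (\<lambda>_. D)) = (\<integral>x. g j x \<partial>D)" if "j \<in> S" for j
    using integral_PiM_coordinate[OF D, of j I "g j"] g that S by auto
  then show "(\<integral>\<omega>. (\<Prod>j\<in>S. g j (\<omega> j)) \<partial>PiM I (\<lambda>_. D)) = (\<Prod>j\<in>S. \<integral>x. g j x \<partial>D)"
    using P.indep_vars_lebesgue_integral[OF S(1) indep int] by simp
  show "integrable (PiM I (\<lambda>_. D)) (\<lambda>\<omega>. \<Prod>j\<in>S. g j (\<omega> j))"
    by (rule P.indep_vars_integrable[OF S(1) indep int])
qed

lemma integral_PiM_mult_disjoint_blocks:
  fixes f g :: "('i \<Rightarrow> 'a) \<Rightarrow> real"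
  assumes D: "prob_space D" and AB: "A \<inter> B = {}" "A \<subseteq> I" "B \<subseteq> I"
    and f: "f \<in> borel_measurable (PiM A (\<lambda>_. D))" "\<And>u. f u = f (restrict u A)"
    and g: "g \<in> borel_measurable (PiM B (\<lambda>_. D))" "\<And>u. g u = g (restrict u B)"
    and int: "integrable (PiM I (\<lambda>_. D)) f" "integrable (PiM I (\<lambda>_. D)) g"
  shows "(\<integral>u. f u * g u \<partial>PiM I (\<lambda>_. D))
       = (\<integral>u. f u \<partial>PiM I (\<lambda>_. D)) * (\<integral>u. g u \<partial>PiM I (\<lambda>_. D))"
proof -
  interpret P: prob_space "PiM I (\<lambda>_. D)"
    using D by (simp add: prob_space_PiM)
  have "P.indep_var (PiM A (\<lambda>_. D)) (\<lambda>u. restrict u A) (PiM B (\<lambda>_. D)) (\<lambda>u. restrict u B)"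
    using P.indep_var_restrict[OF indep_vars_PiM_coordinates[OF D] AB] by simp
  then have "P.indep_var borel (f \<circ> (\<lambda>u. restrict u A)) borel (g \<circ> (\<lambda>u. restrict u B))"
    using f(1) g(1) by (rule P.indep_var_compose)
  moreover have "f \<circ> (\<lambda>u. restrict u A) = f" "g \<circ> (\<lambda>u. restrict u B) = g"
    using f(2) g(2) by (auto simp: fun_eq_iff)
  ultimately show ?thesis
    using P.indep_var_lebesgue_integral int by simp
qed

lemma distr_pair_snd_prob_space:
  assumes "prob_space M1" "prob_space M2"
  shows "distr (M1 \<Otimes>\<^sub>M M2) M2 snd = M2"
proof (intro measure_eqI)
  interpret M1: prob_space M1 by fact
  interpret M2: prob_space M2 by fact
  fix A assume A: "A \<in> sets (distr (M1 \<Otimes>\<^sub>M M2) M2 snd)"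
  then have "emeasure (distr (M1 \<Otimes>\<^sub>M M2) M2 snd) A = emeasure (M1 \<Otimes>\<^sub>M M2) (space M1 \<times> A)"
    by (auto simp: emeasure_distr space_pair_measure dest: sets.sets_into_space
        intro!: arg_cong2[where f=emeasure])
  with A show "emeasure (distr (M1 \<Otimes>\<^sub>M M2) M2 snd) A = emeasure M2 A"
    by (simp add: M2.emeasure_pair_measure_Times M1.emeasure_space_1)
qed simp

lemma
  fixes F :: "'a \<Rightarrow> real"
  assumes M2: "prob_space M2" and F: "F \<in> borel_measurable M1"
  shows integral_pair_fst: "(\<integral>\<omega>. F (fst \<omega>) \<partial>(M1 \<Otimes>\<^sub>M M2)) = (\<integral>x. F x \<partial>M1)"
    and integrable_pair_fst_iff: "integrable (M1 \<Otimes>\<^sub>M M2) (\<lambda>\<omega>. F (fst \<omega>)) \<longleftrightarrow> integrable M1 F"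
proof -
  interpret M2: prob_space M2 by fact
  have meas: "fst \<in> measurable (M1 \<Otimes>\<^sub>M M2) M1" by measurable
  show "(\<integral>\<omega>. F (fst \<omega>) \<partial>(M1 \<Otimes>\<^sub>M M2)) = (\<integral>x. F x \<partial>M1)"
    and "integrable (M1 \<Otimes>\<^sub>M M2) (\<lambda>\<omega>. F (fst \<omega>)) \<longleftrightarrow> integrable M1 F"
    using integral_distr[OF meas F] integrable_distr_eq[OF meas F]
    by (simp_all add: M2.distr_pair_fst)
qed

lemma
  fixes G :: "'b \<Rightarrow> real"
  assumes M1: "prob_space M1" and M2: "prob_space M2" and G: "G \<in> borel_measurable M2"
  shows integral_pair_snd: "(\<integral>\<omega>. G (snd \<omega>) \<partial>(M1 \<Otimes>\<^sub>M M2)) = (\<integral>y. G y \<partial>M2)"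
    and integrable_pair_snd_iff: "integrable (M1 \<Otimes>\<^sub>M M2) (\<lambda>\<omega>. G (snd \<omega>)) \<longleftrightarrow> integrable M2 G"
proof -
  have meas: "snd \<in> measurable (M1 \<Otimes>\<^sub>M M2) M2" by measurable
  show "(\<integral>\<omega>. G (snd \<omega>) \<partial>(M1 \<Otimes>\<^sub>M M2)) = (\<integral>y. G y \<partial>M2)"
    and "integrable (M1 \<Otimes>\<^sub>M M2) (\<lambda>\<omega>. G (snd \<omega>)) \<longleftrightarrow> integrable M2 G"
    using integral_distr[OF meas G] integrable_distr_eq[OF meas G]
    by (simp_all add: distr_pair_snd_prob_space[OF M1 M2])
qed

lemma integral_sq_pair_sum_le:
  fixes F :: "'a \<Rightarrow> real" and G :: "'b \<Rightarrow> real"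
  assumes M1: "prob_space M1" and M2: "prob_space M2"
    and F: "F \<in> borel_measurable M1" "integrable M1 (\<lambda>x. (F x)\<^sup>2)"
    and G: "G \<in> borel_measurable M2" "integrable M2 (\<lambda>y. (G y)\<^sup>2)"
  shows "(\<integral>\<omega>. (F (fst \<omega>) + G (snd \<omega>))\<^sup>2 \<partial>(M1 \<Otimes>\<^sub>M M2))
       \<le> 2 * (\<integral>x. (F x)\<^sup>2 \<partial>M1) + 2 * (\<integral>y. (G y)\<^sup>2 \<partial>M2)"
proof -
  have F2: "(\<lambda>x. (F x)\<^sup>2) \<in> borel_measurable M1" and G2: "(\<lambda>y. (G y)\<^sup>2) \<in> borel_measurable M2"
    using F G by auto
  have int: "integrable (M1 \<Otimes>\<^sub>M M2) (\<lambda>\<omega>. (F (fst \<omega>))\<^sup>2)"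
    "integrable (M1 \<Otimes>\<^sub>M M2) (\<lambda>\<omega>. (G (snd \<omega>))\<^sup>2)"
    using integrable_pair_fst_iff[OF M2 F2] integrable_pair_snd_iff[OF M1 M2 G2] F G
    by simp_all
  have "(\<integral>\<omega>. (F (fst \<omega>) + G (snd \<omega>))\<^sup>2 \<partial>(M1 \<Otimes>\<^sub>M M2))
      \<le> (\<integral>\<omega>. 2 * (F (fst \<omega>))\<^sup>2 + 2 * (G (snd \<omega>))\<^sup>2 \<partial>(M1 \<Otimes>\<^sub>M M2))"
  proof (rule integral_mono')
    fix \<omega>
    have "0 \<le> (F (fst \<omega>) - G (snd \<omega>))\<^sup>2" by simp
    then show "(F (fst \<omega>) + G (snd \<omega>))\<^sup>2 \<le> 2 * (F (fst \<omega>))\<^sup>2 + 2 * (G (snd \<omega>))\<^sup>2"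
      by (simp add: power2_eq_square algebra_simps)
  qed (use int in auto)
  also have "\<dots> = 2 * (\<integral>x. (F x)\<^sup>2 \<partial>M1) + 2 * (\<integral>y. (G y)\<^sup>2 \<partial>M2)"
    using int integral_pair_fst[OF M2 F2] integral_pair_snd[OF M1 M2 G2] by simp
  finally show ?thesis .
qed

lemma noise_dist_moments:
  assumes "\<sigma> \<ge> 0"
  shows "prob_space (noise_dist \<sigma>)"
    and "has_bochner_integral (noise_dist \<sigma>) (\<lambda>x. x) 0"
    and "has_bochner_integral (noise_dist \<sigma>) (\<lambda>x. x\<^sup>2) (\<sigma>\<^sup>2)"
proof -
  have "prob_space (noise_dist \<sigma>) \<and> has_bochner_integral (noise_dist \<sigma>) (\<lambda>x. x) 0 \<and>
    has_bochner_integral (noise_dist \<sigma>) (\<lambda>x. x\<^sup>2) (\<sigma>\<^sup>2)"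
  proof (cases "\<sigma> = 0")
    case True
    interpret prob_space "return lborel (0::real)" by (rule prob_space_return) simp
    have point_mass: "has_bochner_integral (return lborel (0::real)) g (g 0)"
      if "g \<in> borel_measurable borel" for g :: "real \<Rightarrow> real"
    proof -
      have "has_bochner_integral (return lborel (0::real)) (\<lambda>_. g 0) (g 0)"
        using has_bochner_integral_integrable[OF integrable_const, of "g 0"] prob_space by simp
      then show ?thesis
        using that by (subst has_bochner_integral_cong_AE[where g="\<lambda>_. g 0"]) (auto simp: AE_return)
    qed
    have "has_bochner_integral (return lborel (0::real)) (\<lambda>x. x) 0"
      using point_mass[of "\<lambda>x. x"] by simp
    moreover have "has_bochner_integral (return lborel (0::real)) (\<lambda>x. x\<^sup>2) 0"
      using point_mass[of "\<lambda>x. x\<^sup>2"] by simp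
    moreover have "noise_dist \<sigma> = return lborel 0"
      using True by (simp add: noise_dist_def)
    ultimately show ?thesis
      using True prob_space_axioms by simp
  next
    case False
    with assms have \<sigma>: "\<sigma> > 0" by simp
    have "has_bochner_integral lborel (\<lambda>x. normal_density 0 \<sigma> x * x\<^sup>2) (\<sigma>\<^sup>2)"
      using normal_moment_even[OF \<sigma>, where k=1 and \<mu>=0] by (simp add: power2_eq_square)
    moreover have "noise_dist \<sigma> = density lborel (normal_density 0 \<sigma>)"
      using False by (simp add: noise_dist_def)
    ultimately show ?thesis
      using normal_moment_nz_1[OF \<sigma>, of 0]
      by (simp add: prob_space_normal_density[OF \<sigma>] has_bochner_integral_density)
  qed
  then show "prob_space (noise_dist \<sigma>)"
    and "has_bochner_integral (noise_dist \<sigma>) (\<lambda>x. x) 0"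
    and "has_bochner_integral (noise_dist \<sigma>) (\<lambda>x. x\<^sup>2) (\<sigma>\<^sup>2)"
    by auto
qed

lemma
  fixes D :: "real measure"
  assumes D: "prob_space D" and k: "k \<in> J" "k' \<in> J"
    and mean: "has_bochner_integral D (\<lambda>x. x) 0" and var: "has_bochner_integral D (\<lambda>x. x\<^sup>2) v"
  shows integrable_PiM_coordinate_mult: "integrable (PiM J (\<lambda>_. D)) (\<lambda>e. e k * e k')"
    and integral_PiM_coordinate_mult:
      "(\<integral>e. e k * e k' \<partial>PiM J (\<lambda>_. D)) = (if k = k' then v else 0)"
proof -
  have "integrable (PiM J (\<lambda>_. D)) (\<lambda>e. e k * e k') \<and>
    (\<integral>e. e k * e k' \<partial>PiM J (\<lambda>_. D)) = (if k = k' then v else 0)"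
  proof (cases "k = k'")
    case True
    have meas: "(\<lambda>x. x\<^sup>2) \<in> borel_measurable D" using var by auto
    have sq: "(\<lambda>e. e k * e k') = (\<lambda>e. (e k :: real)\<^sup>2)"
      using True by (simp add: power2_eq_square)
    show ?thesis
      unfolding sq if_P[OF True]
      using integral_PiM_coordinate[OF D k(1) meas] integrable_PiM_coordinate_iff[OF D k(1) meas] var
      by (simp add: has_bochner_integral_iff)
  next
    case False
    have "{k, k'} \<subseteq> J" using k by simp
    with False show ?thesis
      using integral_PiM_prod_coordinates[OF D, of "{k, k'}" J "\<lambda>_ x. x"]
        integrable_PiM_prod_coordinates[OF D, of "{k, k'}" J "\<lambda>_ x. x"] mean
      by (simp add: has_bochner_integral_iff)
  qed
  then show "integrable (PiM J (\<lambda>_. D)) (\<lambda>e. e k * e k')"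
    and "(\<integral>e. e k * e k' \<partial>PiM J (\<lambda>_. D)) = (if k = k' then v else 0)"
    by auto
qed

lemma
  fixes D :: "real measure" and w :: "'i \<Rightarrow> real"
  assumes D: "prob_space D" and J: "finite J"
    and mean: "has_bochner_integral D (\<lambda>x. x) 0" and var: "has_bochner_integral D (\<lambda>x. x\<^sup>2) v"
  shows integrable_PiM_lin_comb: "integrable (PiM J (\<lambda>_. D)) (\<lambda>e. \<Sum>k\<in>J. w k * e k)"
    and integral_PiM_lin_comb: "(\<integral>e. (\<Sum>k\<in>J. w k * e k) \<partial>PiM J (\<lambda>_. D)) = 0"
    and integrable_PiM_lin_comb_sq: "integrable (PiM J (\<lambda>_. D)) (\<lambda>e. (\<Sum>k\<in>J. w k * e k)\<^sup>2)"
    and integral_PiM_lin_comb_sq: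
      "(\<integral>e. (\<Sum>k\<in>J. w k * e k)\<^sup>2 \<partial>PiM J (\<lambda>_. D)) = v * (\<Sum>k\<in>J. (w k)\<^sup>2)"
proof -
  have meas: "(\<lambda>x. x) \<in> borel_measurable D" using mean by auto
  have int1: "integrable (PiM J (\<lambda>_. D)) (\<lambda>e. e k)"
    and int0: "(\<integral>e. e k \<partial>PiM J (\<lambda>_. D)) = 0" if "k \<in> J" for k
    using integrable_PiM_coordinate_iff[OF D that meas] integral_PiM_coordinate[OF D that meas] mean
    by (simp_all add: has_bochner_integral_iff)
  show "integrable (PiM J (\<lambda>_. D)) (\<lambda>e. \<Sum>k\<in>J. w k * e k)"
    using int1 by simp
  show "(\<integral>e. (\<Sum>k\<in>J. w k * e k) \<partial>PiM J (\<lambda>_. D)) = 0"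
    using int1 int0 by (simp add: Bochner_Integration.integral_sum)
  have sq: "(\<Sum>k\<in>J. w k * e k)\<^sup>2 = (\<Sum>k\<in>J. \<Sum>k'\<in>J. (w k * w k') * (e k * e k'))"
    for e :: "'i \<Rightarrow> real"
    unfolding power2_eq_square sum_product by (simp only: mult_ac)
  have int2: "integrable (PiM J (\<lambda>_. D)) (\<lambda>e. c * (e k * e k'))" if "k \<in> J" "k' \<in> J" for c k k'
    using integrable_PiM_coordinate_mult[OF D that mean var] by simp
  show "integrable (PiM J (\<lambda>_. D)) (\<lambda>e. (\<Sum>k\<in>J. w k * e k)\<^sup>2)"
    unfolding sq by (intro Bochner_Integration.integrable_sum int2)
  have "(\<integral>e. (\<Sum>k\<in>J. \<Sum>k'\<in>J. (w k * w k') * (e k * e k')) \<partial>PiM J (\<lambda>_. D))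
      = (\<Sum>k\<in>J. \<integral>e. (\<Sum>k'\<in>J. (w k * w k') * (e k * e k')) \<partial>PiM J (\<lambda>_. D))"
    by (intro Bochner_Integration.integral_sum Bochner_Integration.integrable_sum int2)
  also have "\<dots> = (\<Sum>k\<in>J. \<Sum>k'\<in>J. (w k * w k') * (\<integral>e. e k * e k' \<partial>PiM J (\<lambda>_. D)))"
    by (intro sum.cong refl, subst Bochner_Integration.integral_sum)
      (auto simp: integrable_PiM_coordinate_mult[OF D _ _ mean var])
  also have "\<dots> = (\<Sum>k\<in>J. \<Sum>k'\<in>J. (w k * w k') * (if k = k' then v else 0))"
    by (auto intro!: sum.cong simp: integral_PiM_coordinate_mult[OF D _ _ mean var])
  also have "\<dots> = v * (\<Sum>k\<in>J. (w k)\<^sup>2)"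
    using J by (simp add: sum_distrib_left power2_eq_square mult_ac if_distrib cong: if_cong)
  finally show "(\<integral>e. (\<Sum>k\<in>J. w k * e k)\<^sup>2 \<partial>PiM J (\<lambda>_. D)) = v * (\<Sum>k\<in>J. (w k)\<^sup>2)"
    unfolding sq .
qed

abbreviation unif01 :: "real measure" where
  "unif01 \<equiv> uniform_measure lborel {0..1}"

lemma prob_space_unif01: "prob_space unif01"
  by (rule prob_space_uniform_measure) auto

lemma integral_unif01_le:
  assumes "0 \<le> q" "q \<le> 1"
  shows "(\<integral>x. (if x \<le> q then 1 else 0) \<partial>unif01) = q"
proof -
  have "(\<lambda>x::real. if x \<le> q then 1 else 0 :: real) = indicator {..q}"
    by (auto simp: indicator_def)
  then have "(\<integral>x. (if x \<le> q then 1 else 0) \<partial>unif01) = measure unif01 {..q}"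
    by simp
  also have "\<dots> = measure lborel ({0..1} \<inter> {..q}) / measure lborel {0..1::real}"
    by (rule measure_uniform_measure) auto
  also have "{0..1} \<inter> {..q} = {0..q}"
    using assms by auto
  finally show ?thesis
    using assms by simp
qed

section \<open>Lagrange interpolation at the rollout levels\<close>

lemma lagrange_at_node:
  assumes "inj_on p {..\<beta>}" "t \<le> \<beta>" "r \<le> \<beta>"
  shows "lagrange p \<beta> t (p r) = (if t = r then 1 else 0)"
proof (cases "t = r")
  case True
  have "p r \<noteq> p s" if "s \<in> {..\<beta>} - {r}" for s
    using assms(1,3) that by (auto dest: inj_onD)
  then show ?thesis
    using True by (simp add: lagrange_def)
next
  case False
  then show ?thesis
    using assms(3) by (auto simp: lagrange_def intro: prod_zero)
qed

definition lagrange_poly :: "(nat \<Rightarrow> real) \<Rightarrow> nat \<Rightarrow> nat \<Rightarrow> real poly" where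
  "lagrange_poly p \<beta> t = (\<Prod>s\<in>{..\<beta>} - {t}. [:- p s / (p t - p s), 1 / (p t - p s):])"

lemma poly_lagrange_poly: "poly (lagrange_poly p \<beta> t) x = lagrange p \<beta> t x"
  unfolding lagrange_poly_def lagrange_def poly_prod by (simp add: diff_divide_distrib)

lemma degree_lagrange_poly:
  assumes "t \<le> \<beta>"
  shows "degree (lagrange_poly p \<beta> t) \<le> \<beta>"
proof -
  have "degree (lagrange_poly p \<beta> t) \<le> (\<Sum>s\<in>{..\<beta>} - {t}. 1)"
    unfolding lagrange_poly_def
    by (rule order.trans[OF degree_prod_sum_le], simp, intro sum_mono) simp
  then show ?thesis
    using assms by simp
qed

lemma poly_eq_0_if_vanishes_on_nodes:
  fixes Q :: "real poly"
  assumes "degree Q \<le> \<beta>" "inj_on p {..\<beta>}" "\<And>r. r \<le> \<beta> \<Longrightarrow> poly Q (p r) = 0"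
  shows "Q = 0"
proof (rule ccontr)
  assume "Q \<noteq> 0"
  then have "card (p ` {..\<beta>}) \<le> card {y. poly Q y = 0}"
    using assms(3) by (intro card_mono) (auto simp: poly_roots_finite)
  also have "\<dots> \<le> degree Q"
    using \<open>Q \<noteq> 0\<close> by (rule card_poly_roots_bound)
  finally show False
    using assms(1,2) by (simp add: card_image)
qed

lemma lagrange_interpolation:
  fixes f :: "real poly"
  assumes inj: "inj_on p {..\<beta>}" and deg: "degree f \<le> \<beta>"
  shows "(\<Sum>t\<le>\<beta>. lagrange p \<beta> t x * poly f (p t)) = poly f x"
proof -
  define Q where "Q = (\<Sum>t\<le>\<beta>. smult (poly f (p t)) (lagrange_poly p \<beta> t)) - f"
  have poly_Q: "poly Q y = (\<Sum>t\<le>\<beta>. lagrange p \<beta> t y * poly f (p t)) - poly f y" for y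
    by (simp add: Q_def poly_sum poly_lagrange_poly mult.commute)
  have "degree (smult (poly f (p t)) (lagrange_poly p \<beta> t)) \<le> \<beta>" if "t \<le> \<beta>" for t
    using degree_smult_le degree_lagrange_poly[OF that] order.trans by blast
  then have "degree Q \<le> \<beta>"
    unfolding Q_def using deg by (intro degree_diff_le degree_sum_le) auto
  moreover have "poly Q (p r) = 0" if "r \<le> \<beta>" for r
  proof -
    have "(\<Sum>t\<le>\<beta>. lagrange p \<beta> t (p r) * poly f (p t)) = (\<Sum>t\<le>\<beta>. if t = r then poly f (p t) else 0)"
      using that by (intro sum.cong) (simp_all add: lagrange_at_node[OF inj])
    then show ?thesis
      using that by (simp add: poly_Q)
  qed
  ultimately have "Q = 0"
    by (rule poly_eq_0_if_vanishes_on_nodes[OF _ inj])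
  then show ?thesis
    using poly_Q[of x] by simp
qed

lemma abs_lagrange_le:
  assumes nodes: "\<And>s. s \<le> \<beta> \<Longrightarrow> 0 \<le> p s \<and> p s \<le> 1"
    and gap: "\<And>s. s \<le> \<beta> \<Longrightarrow> s \<noteq> t \<Longrightarrow> \<delta> \<le> \<bar>p t - p s\<bar>" and "\<delta> > 0"
    and "t \<le> \<beta>" "0 \<le> x" "x \<le> 1"
  shows "\<bar>lagrange p \<beta> t x\<bar> \<le> (1 / \<delta>) ^ \<beta>"
proof -
  have "\<bar>lagrange p \<beta> t x\<bar> = (\<Prod>s\<in>{..\<beta>} - {t}. \<bar>x - p s\<bar> / \<bar>p t - p s\<bar>)"
    by (simp add: lagrange_def abs_prod)
  also have "\<dots> \<le> (\<Prod>s\<in>{..\<beta>} - {t}. 1 / \<delta>)"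
  proof (rule prod_mono)
    fix s assume s: "s \<in> {..\<beta>} - {t}"
    have "\<bar>x - p s\<bar> / \<bar>p t - p s\<bar> \<le> 1 / \<bar>p t - p s\<bar>"
      using nodes[of s] s assms(5,6) by (intro divide_right_mono) auto
    also have "\<dots> \<le> 1 / \<delta>"
      using gap[of s] s \<open>\<delta> > 0\<close> by (intro divide_left_mono) auto
    finally show "0 \<le> \<bar>x - p s\<bar> / \<bar>p t - p s\<bar> \<and> \<bar>x - p s\<bar> / \<bar>p t - p s\<bar> \<le> 1 / \<delta>"
      by simp
  qed
  also have "\<dots> = (1 / \<delta>) ^ \<beta>"
    using \<open>t \<le> \<beta>\<close> by simp
  finally show ?thesis .
qed

definition pi_weight :: "(nat \<Rightarrow> real) \<Rightarrow> nat \<Rightarrow> nat \<Rightarrow> real" where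
  "pi_weight p \<beta> t = lagrange p \<beta> t 1 - lagrange p \<beta> t 0"

lemma pi_weight_0: "pi_weight p 0 0 = 0"
  by (simp add: pi_weight_def lagrange_def)

lemma sum_pi_weight_poly:
  fixes f :: "real poly"
  assumes "inj_on p {..\<beta>}" "degree f \<le> \<beta>"
  shows "(\<Sum>t\<le>\<beta>. pi_weight p \<beta> t * poly f (p t)) = poly f 1 - poly f 0"
  using lagrange_interpolation[OF assms, of 1] lagrange_interpolation[OF assms, of 0]
  by (simp add: pi_weight_def left_diff_distrib sum_subtractf)

locale staggered_rollout =
  fixes p :: "nat \<Rightarrow> real" and \<beta> :: nat
  assumes p_0: "p 0 = 0" and p_less_Suc: "\<forall>t<\<beta>. p t < p (Suc t)" and p_le_1: "p \<beta> \<le> 1"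
begin

lemma p_less: "s < t \<Longrightarrow> t \<le> \<beta> \<Longrightarrow> p s < p t"
proof (induction t)
  case (Suc t)
  then have "p t < p (Suc t)"
    using p_less_Suc by simp
  then show ?case
    using Suc by (cases "s = t") auto
qed simp

lemma p_le: "s \<le> t \<Longrightarrow> t \<le> \<beta> \<Longrightarrow> p s \<le> p t"
  using p_less by (cases "s = t") (auto simp: order.order_iff_strict)

lemma p_bounds: "t \<le> \<beta> \<Longrightarrow> 0 \<le> p t \<and> p t \<le> 1"
  using p_le[of 0 t] p_le[of t \<beta>] p_0 p_le_1 by auto

lemma inj_on_p: "inj_on p {..\<beta>}"
  by (rule inj_onI) (metis atMost_iff less_irrefl nat_neq_iff p_less)

text \<open>For \<beta> = 0, delta_p p \<beta> is the unspecified Min {}; it then only occurs as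
  delta_p p \<beta> ^ 0 = 1, which is why the weight bounds below treat \<beta> = 0 separately.\<close>

lemma delta_p_pos: "1 \<le> \<beta> \<Longrightarrow> delta_p p \<beta> > 0"
  unfolding delta_p_def using p_less by (subst Min_gr_iff) auto

lemma delta_p_le_gap:
  assumes "s \<le> \<beta>" "t \<le> \<beta>" "s \<noteq> t"
  shows "delta_p p \<beta> \<le> \<bar>p t - p s\<bar>"
proof -
  have ordered: "delta_p p \<beta> \<le> p b - p a" if "a < b" "b \<le> \<beta>" for a b
  proof -
    have "delta_p p \<beta> \<le> p b - p (b - 1)"
      unfolding delta_p_def using that by (intro Min_le) auto
    moreover have "p a \<le> p (b - 1)"
      using that by (intro p_le) auto
    ultimately show ?thesis by simp
  qed
  show ?thesis
  proof (cases "s < t")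
    case True
    then show ?thesis
      using ordered[of s t] assms by (auto simp: abs_if)
  next
    case False
    then show ?thesis
      using ordered[of t s] assms by (auto simp: abs_if)
  qed
qed

lemma abs_pi_weight_le:
  assumes "t \<le> \<beta>"
  shows "\<bar>pi_weight p \<beta> t\<bar> \<le> 2 / delta_p p \<beta> ^ \<beta>"
proof (cases "\<beta> = 0")
  case True
  then show ?thesis
    using assms pi_weight_0 by simp
next
  case False
  then have "delta_p p \<beta> > 0"
    by (simp add: delta_p_pos)
  have lagrange_le: "\<bar>lagrange p \<beta> t x\<bar> \<le> (1 / delta_p p \<beta>) ^ \<beta>" if "0 \<le> x" "x \<le> 1" for x
    by (rule abs_lagrange_le) (use p_bounds delta_p_le_gap assms that \<open>delta_p p \<beta> > 0\<close> in auto)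
  have "\<bar>pi_weight p \<beta> t\<bar> \<le> (1 / delta_p p \<beta>) ^ \<beta> + (1 / delta_p p \<beta>) ^ \<beta>"
    using abs_triangle_ineq4[of "lagrange p \<beta> t 1" "lagrange p \<beta> t 0"] lagrange_le[of 1] lagrange_le[of 0]
    unfolding pi_weight_def by linarith
  then show ?thesis
    by (simp add: power_divide)
qed

lemma sum_abs_pi_weight_le: "(\<Sum>t\<le>\<beta>. \<bar>pi_weight p \<beta> t\<bar>) \<le> 4 * real \<beta> / delta_p p \<beta> ^ \<beta>"
proof (cases "\<beta> = 0")
  case True
  then show ?thesis
    using pi_weight_0 by simp
next
  case False
  have "(\<Sum>t\<le>\<beta>. \<bar>pi_weight p \<beta> t\<bar>) \<le> (\<Sum>t\<le>\<beta>. 2 / delta_p p \<beta> ^ \<beta>)"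
    by (rule sum_mono) (simp add: abs_pi_weight_le)
  also have "\<dots> = (real \<beta> + 1) * (2 / delta_p p \<beta> ^ \<beta>)"
    by simp
  also have "\<dots> \<le> (2 * real \<beta>) * (2 / delta_p p \<beta> ^ \<beta>)"
    using False delta_p_pos by (intro mult_right_mono) auto
  finally show ?thesis
    by simp
qed

lemma sum_sq_pi_weight_le: "(\<Sum>t\<le>\<beta>. (pi_weight p \<beta> t)\<^sup>2) \<le> 8 * real \<beta> / delta_p p \<beta> ^ (2 * \<beta>)"
proof (cases "\<beta> = 0")
  case True
  then show ?thesis
    using pi_weight_0 by simp
next
  case False
  have "(pi_weight p \<beta> t)\<^sup>2 \<le> 4 / delta_p p \<beta> ^ (2 * \<beta>)" if "t \<le> \<beta>" for t
  proof -
    have "(pi_weight p \<beta> t)\<^sup>2 = \<bar>pi_weight p \<beta> t\<bar>\<^sup>2"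
      by simp
    also have "\<dots> \<le> (2 / delta_p p \<beta> ^ \<beta>)\<^sup>2"
      using abs_pi_weight_le[OF that] by (intro power_mono) auto
    also have "\<dots> = 4 / delta_p p \<beta> ^ (2 * \<beta>)"
      by (simp add: power_divide power_mult[symmetric] mult.commute)
    finally show ?thesis .
  qed
  then have "(\<Sum>t\<le>\<beta>. (pi_weight p \<beta> t)\<^sup>2) \<le> (\<Sum>t\<le>\<beta>. 4 / delta_p p \<beta> ^ (2 * \<beta>))"
    by (rule sum_mono) simp
  also have "\<dots> = (real \<beta> + 1) * (4 / delta_p p \<beta> ^ (2 * \<beta>))"
    by simp
  also have "\<dots> \<le> (2 * real \<beta>) * (4 / delta_p p \<beta> ^ (2 * \<beta>))"
    using False delta_p_pos by (intro mult_right_mono) auto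
  finally show ?thesis
    by simp
qed

end

section \<open>Sums of locally dependent variables\<close>

lemma
  fixes g :: "'i \<Rightarrow> 'a \<Rightarrow> real" and B :: real
  assumes M: "prob_space M" and I: "finite I" and P: "P \<subseteq> I \<times> I"
    and meas: "\<And>i. i \<in> I \<Longrightarrow> g i \<in> borel_measurable M"
    and bound: "\<And>i x. i \<in> I \<Longrightarrow> x \<in> space M \<Longrightarrow> \<bar>g i x\<bar> \<le> B"
    and uncorrelated: "\<And>i i'. (i, i') \<in> I \<times> I - P \<Longrightarrow> (\<integral>x. g i x * g i' x \<partial>M) = 0"
  shows integrable_sq_sum_of_bounded: "integrable M (\<lambda>x. (\<Sum>i\<in>I. g i x)\<^sup>2)"
    and integral_sq_sum_le_card_correlated: "(\<integral>x. (\<Sum>i\<in>I. g i x)\<^sup>2 \<partial>M) \<le> real (card P) * B\<^sup>2"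
proof -
  interpret prob_space M by fact
  have sq: "(\<Sum>i\<in>I. g i x)\<^sup>2 = (\<Sum>(i, i')\<in>I \<times> I. g i x * g i' x)" for x
    by (simp add: power2_eq_square sum_product sum.cartesian_product)
  have prod_bound: "\<bar>g i x * g i' x\<bar> \<le> B\<^sup>2" if "(i, i') \<in> I \<times> I" "x \<in> space M" for i i' x
    using bound[of i x] bound[of i' x] that by (simp add: abs_mult power2_eq_square mult_mono')
  have int: "integrable M (\<lambda>x. g i x * g i' x)" if "(i, i') \<in> I \<times> I" for i i'
    using that prod_bound meas by (intro integrable_const_bound[where B="B\<^sup>2"]) auto
  show "integrable M (\<lambda>x. (\<Sum>i\<in>I. g i x)\<^sup>2)"
    unfolding sq using int by auto
  have "(\<integral>x. (\<Sum>i\<in>I. g i x)\<^sup>2 \<partial>M) = (\<Sum>(i, i')\<in>I \<times> I. \<integral>x. g i x * g i' x \<partial>M)"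
    unfolding sq using int by (subst Bochner_Integration.integral_sum) (auto simp: case_prod_beta)
  also have "\<dots> \<le> (\<Sum>(i, i')\<in>I \<times> I. if (i, i') \<in> P then B\<^sup>2 else 0)"
  proof (rule sum_mono)
    fix k assume k: "k \<in> I \<times> I"
    obtain i i' where [simp]: "k = (i, i')" by fastforce
    have "(\<integral>x. g i x * g i' x \<partial>M) \<le> B\<^sup>2"
      using k int prod_bound by (intro integral_le_const) (auto simp: abs_le_iff)
    then show "(case k of (i, i') \<Rightarrow> \<integral>x. g i x * g i' x \<partial>M)
        \<le> (case k of (i, i') \<Rightarrow> if (i, i') \<in> P then B\<^sup>2 else 0)"
      using k uncorrelated[of i i'] by auto
  qed
  also have "\<dots> = real (card P) * B\<^sup>2"
    using P I by (simp add: sum.If_cases Int_absorb1)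
  finally show "(\<integral>x. (\<Sum>i\<in>I. g i x)\<^sup>2 \<partial>M) \<le> real (card P) * B\<^sup>2" .
qed

lemma in_nbhd_subset: "E \<subseteq> {..<n} \<times> {..<n} \<Longrightarrow> in_nbhd E i \<subseteq> {..<n}"
  by (auto simp: in_nbhd_def)

lemma out_nbhd_subset: "E \<subseteq> {..<n} \<times> {..<n} \<Longrightarrow> out_nbhd E i \<subseteq> {..<n}"
  by (auto simp: out_nbhd_def)

lemma card_in_nbhd_le: "i < n \<Longrightarrow> card (in_nbhd E i) \<le> max_degree n E"
  unfolding max_degree_def by (rule max.coboundedI1, rule Max_ge) simp_all

lemma card_out_nbhd_le: "i < n \<Longrightarrow> card (out_nbhd E i) \<le> max_degree n E"
  unfolding max_degree_def by (rule max.coboundedI2, rule Max_ge) simp_all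

lemma card_in_nbhd_overlaps_le:
  assumes E: "E \<subseteq> {..<n} \<times> {..<n}"
  shows "card {(i, i') \<in> {..<n} \<times> {..<n}. in_nbhd E i \<inter> in_nbhd E i' \<noteq> {}} \<le> n * max_degree n E ^ 2"
proof -
  let ?d = "max_degree n E"
  let ?B = "\<lambda>i. \<Union>j\<in>in_nbhd E i. out_nbhd E j"
  have fin: "finite (in_nbhd E i)" "finite (out_nbhd E i)" for i
    using finite_subset[OF in_nbhd_subset[OF E]] finite_subset[OF out_nbhd_subset[OF E]] by auto
  \<comment> \<open>if i and i' share the in-neighbour j, then i' is an out-neighbour of j\<close>
  have "{(i, i') \<in> {..<n} \<times> {..<n}. in_nbhd E i \<inter> in_nbhd E i' \<noteq> {}} \<subseteq> Sigma {..<n} ?B"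
    by (auto simp: in_nbhd_def out_nbhd_def)
  then have "card {(i, i') \<in> {..<n} \<times> {..<n}. in_nbhd E i \<inter> in_nbhd E i' \<noteq> {}}
      \<le> card (Sigma {..<n} ?B)"
    using fin by (intro card_mono) auto
  also have "\<dots> = (\<Sum>i<n. card (?B i))"
    using fin by simp
  also have "\<dots> \<le> (\<Sum>i<n. ?d * ?d)"
  proof (rule sum_mono)
    fix i assume "i \<in> {..<n}"
    have "card (?B i) \<le> (\<Sum>j\<in>in_nbhd E i. card (out_nbhd E j))"
      using fin(1) by (rule card_UN_le)
    also have "\<dots> \<le> (\<Sum>j\<in>in_nbhd E i. ?d)"
      using in_nbhd_subset[OF E] by (intro sum_mono card_out_nbhd_le) auto
    also have "\<dots> \<le> ?d * ?d"
      using card_in_nbhd_le[of i n E] \<open>i \<in> {..<n}\<close> by simp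
    finally show "card (?B i) \<le> ?d * ?d" .
  qed
  finally show ?thesis
    by (simp add: power2_eq_square)
qed

section \<open>The polynomial interpolation estimator\<close>

locale rollout_model = staggered_rollout p \<beta> for p \<beta> +
  fixes n :: nat and E :: "(nat \<times> nat) set" and c :: "nat \<Rightarrow> nat set \<Rightarrow> real"
  assumes n_pos: "n > 0" and E_subset: "E \<subseteq> {..<n} \<times> {..<n}"
begin

abbreviation U :: "(nat \<Rightarrow> real) measure" where
  "U \<equiv> PiM {..<n} (\<lambda>_. unif01)"

abbreviation exposures :: "nat \<Rightarrow> nat set set" where
  "exposures i \<equiv> {S. S \<subseteq> in_nbhd E i \<and> card S \<le> \<beta>}"

lemma prob_space_U: "prob_space U"
  by (simp add: prob_space_PiM prob_space_unif01)

lemma finite_in_nbhd: "finite (in_nbhd E i)"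
  using finite_subset[OF in_nbhd_subset[OF E_subset]] by blast

lemma finite_exposures: "finite (exposures i)"
  by (rule finite_subset[of _ "Pow (in_nbhd E i)"]) (use finite_in_nbhd in auto)

lemma sum_abs_coeffs_le_Ymax: "i < n \<Longrightarrow> (\<Sum>S\<in>exposures i. \<bar>c i S\<bar>) \<le> Ymax n E \<beta> c"
  unfolding Ymax_def by (rule Max_ge) simp_all

lemma abs_Ypot_le: "i < n \<Longrightarrow> (\<And>j. z j \<in> {0, 1}) \<Longrightarrow> \<bar>Ypot E \<beta> c i z\<bar> \<le> Ymax n E \<beta> c"
proof -
  assume "i < n" and z: "\<And>j. z j \<in> {0, 1}"
  have "\<bar>z j\<bar> \<le> 1" for j
    using z[of j] by auto
  then have "\<bar>\<Prod>j\<in>S. z j\<bar> \<le> 1" for S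
    unfolding abs_prod by (intro prod_le_1) auto
  then have "\<bar>Ypot E \<beta> c i z\<bar> \<le> (\<Sum>S\<in>exposures i. \<bar>c i S\<bar>)"
    unfolding Ypot_def
    by (intro order.trans[OF sum_abs] sum_mono) (simp add: abs_mult mult_left_le)
  then show ?thesis
    using sum_abs_coeffs_le_Ymax[OF \<open>i < n\<close>] by linarith
qed

definition outcome_poly :: "nat \<Rightarrow> real poly" where
  "outcome_poly i = (\<Sum>S\<in>exposures i. monom (c i S) (card S))"

lemma degree_outcome_poly: "degree (outcome_poly i) \<le> \<beta>"
  unfolding outcome_poly_def using finite_exposures
  by (intro degree_sum_le) (auto intro: order.trans[OF degree_monom_le])

lemma poly_outcome_poly: "poly (outcome_poly i) x = (\<Sum>S\<in>exposures i. c i S * x ^ card S)"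
  by (simp add: outcome_poly_def poly_sum poly_monom)

lemma Ypot_const: "Ypot E \<beta> c i (\<lambda>_. x) = poly (outcome_poly i) x"
  by (simp add: Ypot_def poly_outcome_poly)

lemma measurable_treat:
  assumes "j \<in> J"
  shows "(\<lambda>u. treat p u t j) \<in> borel_measurable (PiM J (\<lambda>_. unif01))"
  unfolding treat_def using assms by measurable

lemma measurable_Ypot_treat:
  assumes "in_nbhd E i \<subseteq> J"
  shows "(\<lambda>u. Ypot E \<beta> c i (treat p u t)) \<in> borel_measurable (PiM J (\<lambda>_. unif01))"
  unfolding Ypot_def using assms
  by (intro borel_measurable_sum borel_measurable_times borel_measurable_const
      borel_measurable_prod measurable_treat) auto

lemma Ypot_treat_restrict:
  "Ypot E \<beta> c i (treat p u t) = Ypot E \<beta> c i (treat p (restrict u (in_nbhd E i)) t)"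
  unfolding Ypot_def treat_def by (intro sum.cong refl arg_cong2[where f="(*)"] prod.cong) auto

lemma
  assumes "t \<le> \<beta>"
  shows integrable_Ypot_treat: "integrable U (\<lambda>u. Ypot E \<beta> c i (treat p u t))"
    and integral_Ypot_treat: "(\<integral>u. Ypot E \<beta> c i (treat p u t) \<partial>U) = poly (outcome_poly i) (p t)"
proof -
  define z where "z x = (if x \<le> p t then 1 else 0 :: real)" for x
  have treat_eq: "treat p u t j = z (u j)" for u j
    by (simp add: treat_def z_def)
  interpret unif01: prob_space unif01
    by (rule prob_space_unif01)
  have "integrable unif01 z"
    unfolding z_def by (intro unif01.integrable_const_bound[where B=1]) auto
  moreover have "(\<integral>x. z x \<partial>unif01) = p t"
    unfolding z_def using p_bounds[OF assms] by (intro integral_unif01_le) auto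
  moreover have S: "finite S" "S \<subseteq> {..<n}" if "S \<in> exposures i" for S
    using that finite_in_nbhd in_nbhd_subset[OF E_subset, of i] by (auto intro: finite_subset)
  ultimately have prod_int: "integrable U (\<lambda>u. \<Prod>j\<in>S. treat p u t j)"
    and prod_eq: "(\<integral>u. (\<Prod>j\<in>S. treat p u t j) \<partial>U) = p t ^ card S" if "S \<in> exposures i" for S
    using integrable_PiM_prod_coordinates[OF prob_space_unif01 S[OF that], of "\<lambda>_. z"]
      integral_PiM_prod_coordinates[OF prob_space_unif01 S[OF that], of "\<lambda>_. z"]
    by (simp_all add: treat_eq)
  show "integrable U (\<lambda>u. Ypot E \<beta> c i (treat p u t))"
    unfolding Ypot_def using prod_int by (intro Bochner_Integration.integrable_sum integrable_mult_right)
  show "(\<integral>u. Ypot E \<beta> c i (treat p u t) \<partial>U) = poly (outcome_poly i) (p t)"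
    unfolding Ypot_def poly_outcome_poly using prod_int prod_eq
    by (subst Bochner_Integration.integral_sum) auto
qed

definition unit_est :: "nat \<Rightarrow> (nat \<Rightarrow> real) \<Rightarrow> real" where
  "unit_est i u = (\<Sum>t\<le>\<beta>. pi_weight p \<beta> t * Ypot E \<beta> c i (treat p u t))"

lemma integrable_unit_est: "integrable U (unit_est i)"
  unfolding unit_est_def
  by (intro Bochner_Integration.integrable_sum integrable_mult_right integrable_Ypot_treat) simp

lemma integral_unit_est: "(\<integral>u. unit_est i u \<partial>U) = Ypot E \<beta> c i (\<lambda>_. 1) - Ypot E \<beta> c i (\<lambda>_. 0)"
proof -
  have "(\<integral>u. unit_est i u \<partial>U) = (\<Sum>t\<le>\<beta>. pi_weight p \<beta> t * poly (outcome_poly i) (p t))"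
    unfolding unit_est_def using integrable_Ypot_treat integral_Ypot_treat
    by (subst Bochner_Integration.integral_sum) auto
  also have "\<dots> = poly (outcome_poly i) 1 - poly (outcome_poly i) 0"
    by (rule sum_pi_weight_poly[OF inj_on_p degree_outcome_poly])
  finally show ?thesis
    by (simp add: Ypot_const)
qed

lemma measurable_unit_est: "in_nbhd E i \<subseteq> J \<Longrightarrow> unit_est i \<in> borel_measurable (PiM J (\<lambda>_. unif01))"
  unfolding unit_est_def by (intro borel_measurable_sum borel_measurable_times
      borel_measurable_const measurable_Ypot_treat)

lemma unit_est_restrict: "unit_est i u = unit_est i (restrict u (in_nbhd E i))"
  unfolding unit_est_def using Ypot_treat_restrict by simp

lemma abs_unit_est_le:
  assumes "i < n"
  shows "\<bar>unit_est i u\<bar> \<le> (\<Sum>t\<le>\<beta>. \<bar>pi_weight p \<beta> t\<bar>) * Ymax n E \<beta> c"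
proof -
  have "\<bar>unit_est i u\<bar> \<le> (\<Sum>t\<le>\<beta>. \<bar>pi_weight p \<beta> t\<bar> * \<bar>Ypot E \<beta> c i (treat p u t)\<bar>)"
    unfolding unit_est_def by (rule order.trans[OF sum_abs]) (simp add: abs_mult)
  also have "\<dots> \<le> (\<Sum>t\<le>\<beta>. \<bar>pi_weight p \<beta> t\<bar> * Ymax n E \<beta> c)"
    using abs_Ypot_le[OF assms] by (intro sum_mono mult_left_mono) (auto simp: treat_def)
  finally show ?thesis
    by (simp add: sum_distrib_right)
qed

definition est_treat :: "(nat \<Rightarrow> real) \<Rightarrow> real" where
  "est_treat u = (1 / real n) * (\<Sum>i<n. unit_est i u)"

lemma integrable_est_treat: "integrable U est_treat"
  unfolding est_treat_def using integrable_unit_est by simp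

lemma integral_est_treat: "(\<integral>u. est_treat u \<partial>U) = TTE n E \<beta> c"
  unfolding est_treat_def TTE_def using integrable_unit_est
  by (simp add: Bochner_Integration.integral_sum integral_unit_est)

definition unit_dev :: "nat \<Rightarrow> (nat \<Rightarrow> real) \<Rightarrow> real" where
  "unit_dev i u = unit_est i u - (\<integral>v. unit_est i v \<partial>U)"

lemma est_treat_minus_TTE: "est_treat u - TTE n E \<beta> c = (1 / real n) * (\<Sum>i<n. unit_dev i u)"
  unfolding est_treat_def TTE_def unit_dev_def
  by (simp add: integral_unit_est sum_subtractf right_diff_distrib)

lemma
  shows integrable_unit_dev: "integrable U (unit_dev i)"
    and integral_unit_dev: "(\<integral>u. unit_dev i u \<partial>U) = 0"
proof -
  interpret U: prob_space U by (rule prob_space_U)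
  show "integrable U (unit_dev i)" "(\<integral>u. unit_dev i u \<partial>U) = 0"
    unfolding unit_dev_def using integrable_unit_est by (simp_all add: U.prob_space)
qed

lemma abs_unit_dev_le:
  assumes "i < n"
  shows "\<bar>unit_dev i u\<bar> \<le> 2 * (\<Sum>t\<le>\<beta>. \<bar>pi_weight p \<beta> t\<bar>) * Ymax n E \<beta> c"
proof -
  interpret U: prob_space U by (rule prob_space_U)
  have "\<bar>\<integral>v. unit_est i v \<partial>U\<bar> \<le> (\<Sum>t\<le>\<beta>. \<bar>pi_weight p \<beta> t\<bar>) * Ymax n E \<beta> c"
    using integrable_unit_est abs_unit_est_le[OF assms]
    by (intro order.trans[OF integral_abs_bound] U.integral_le_const) auto
  then show ?thesis
    unfolding unit_dev_def using abs_unit_est_le[OF assms, of u] by linarith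
qed

lemma integral_unit_dev_mult:
  assumes "in_nbhd E i \<inter> in_nbhd E i' = {}"
  shows "(\<integral>u. unit_dev i u * unit_dev i' u \<partial>U) = 0"
proof -
  have "unit_dev j \<in> borel_measurable (PiM (in_nbhd E j) (\<lambda>_. unif01))"
    and "unit_dev j u = unit_dev j (restrict u (in_nbhd E j))" for j u
    unfolding unit_dev_def using measurable_unit_est[of j] unit_est_restrict by auto
  then have "(\<integral>u. unit_dev i u * unit_dev i' u \<partial>U) = (\<integral>u. unit_dev i u \<partial>U) * (\<integral>u. unit_dev i' u \<partial>U)"
    by (intro integral_PiM_mult_disjoint_blocks[OF prob_space_unif01 assms
          in_nbhd_subset[OF E_subset] in_nbhd_subset[OF E_subset]] integrable_unit_dev)
  then show ?thesis
    by (simp add: integral_unit_dev)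
qed

lemma integral_sq_est_treat_le:
  "(\<integral>u. (est_treat u - TTE n E \<beta> c)\<^sup>2 \<partial>U)
     \<le> 4 * real (max_degree n E) ^ 2 * (\<Sum>t\<le>\<beta>. \<bar>pi_weight p \<beta> t\<bar>)\<^sup>2 * (Ymax n E \<beta> c)\<^sup>2 / real n"
    (is "_ \<le> 4 * real ?d ^ 2 * ?K\<^sup>2 * ?Y\<^sup>2 / real n")
  and integrable_sq_est_treat: "integrable U (\<lambda>u. (est_treat u - TTE n E \<beta> c)\<^sup>2)"
proof -
  define P where "P = {(i, i') \<in> {..<n} \<times> {..<n}. in_nbhd E i \<inter> in_nbhd E i' \<noteq> {}}"
  have P: "P \<subseteq> {..<n} \<times> {..<n}"
    by (auto simp: P_def)
  have meas: "unit_dev i \<in> borel_measurable U" for i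
    using integrable_unit_dev by auto
  have uncorrelated: "(\<integral>u. unit_dev i u * unit_dev i' u \<partial>U) = 0"
    if "(i, i') \<in> {..<n} \<times> {..<n} - P" for i i'
    using that by (intro integral_unit_dev_mult) (auto simp: P_def)
  note sum_sq = integrable_sq_sum_of_bounded integral_sq_sum_le_card_correlated
  note sum_sq = sum_sq[OF prob_space_U finite_lessThan P meas abs_unit_dev_le uncorrelated]
  show "integrable U (\<lambda>u. (est_treat u - TTE n E \<beta> c)\<^sup>2)"
    unfolding est_treat_minus_TTE power_mult_distrib using sum_sq by simp
  have "(\<integral>u. (est_treat u - TTE n E \<beta> c)\<^sup>2 \<partial>U) = (1 / real n)\<^sup>2 * (\<integral>u. (\<Sum>i<n. unit_dev i u)\<^sup>2 \<partial>U)"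
    unfolding est_treat_minus_TTE power_mult_distrib by simp
  also have "\<dots> \<le> (1 / real n)\<^sup>2 * (real (card P) * (2 * ?K * ?Y)\<^sup>2)"
    using sum_sq by (intro mult_left_mono) auto
  also have "\<dots> \<le> (1 / real n)\<^sup>2 * (real (n * ?d ^ 2) * (2 * ?K * ?Y)\<^sup>2)"
  proof -
    have "real (card P) \<le> real (n * ?d ^ 2)"
      unfolding P_def of_nat_le_iff by (rule card_in_nbhd_overlaps_le[OF E_subset])
    then show ?thesis
      by (intro mult_left_mono mult_right_mono) auto
  qed
  also have "\<dots> = 4 * real ?d ^ 2 * ?K\<^sup>2 * ?Y\<^sup>2 / real n"
    using n_pos by (simp add: field_simps power2_eq_square)
  finally show "(\<integral>u. (est_treat u - TTE n E \<beta> c)\<^sup>2 \<partial>U) \<le> 4 * real ?d ^ 2 * ?K\<^sup>2 * ?Y\<^sup>2 / real n" .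
qed

definition est_noise :: "(nat \<times> nat \<Rightarrow> real) \<Rightarrow> real" where
  "est_noise e = (\<Sum>k\<in>{..<n} \<times> {..\<beta>}. pi_weight p \<beta> (snd k) / real n * e k)"

lemma est_PI_split: "est_PI n E \<beta> c p \<omega> = est_treat (fst \<omega>) + est_noise (snd \<omega>)"
proof -
  have "est_noise e = (\<Sum>t\<le>\<beta>. pi_weight p \<beta> t * ((1 / real n) * (\<Sum>i<n. e (i, t))))" for e
  proof -
    have "(\<Sum>i<n. \<Sum>t\<le>\<beta>. pi_weight p \<beta> t / real n * e (i, t)) = est_noise e"
      unfolding est_noise_def sum.cartesian_product by (rule sum.cong) auto
    then show ?thesis
      by (subst (asm) sum.swap) (simp add: sum_distrib_left)
  qed
  moreover have "est_treat u
      = (\<Sum>t\<le>\<beta>. pi_weight p \<beta> t * ((1 / real n) * (\<Sum>i<n. Ypot E \<beta> c i (treat p u t))))" for u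
    unfolding est_treat_def unit_est_def
    by (subst sum.swap) (simp add: sum_distrib_left mult_ac)
  ultimately show ?thesis
    by (simp add: est_PI_def pi_weight_def Yobs_def sum.distrib distrib_left)
qed

lemma integral_sq_est_treat_le_delta_p:
  "(\<integral>u. (est_treat u - TTE n E \<beta> c)\<^sup>2 \<partial>U)
     \<le> 64 * (real (max_degree n E) ^ 2 * real \<beta> ^ 2 / real n * (Ymax n E \<beta> c)\<^sup>2
              / delta_p p \<beta> ^ (2 * \<beta>))"
proof -
  let ?D = "delta_p p \<beta> ^ \<beta>"
  have "(\<Sum>t\<le>\<beta>. \<bar>pi_weight p \<beta> t\<bar>)\<^sup>2 \<le> (4 * real \<beta> / ?D)\<^sup>2"
    using sum_abs_pi_weight_le by (intro power_mono) (auto intro: sum_nonneg)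
  then have "4 * real (max_degree n E) ^ 2 * (\<Sum>t\<le>\<beta>. \<bar>pi_weight p \<beta> t\<bar>)\<^sup>2 * (Ymax n E \<beta> c)\<^sup>2 / real n
      \<le> 4 * real (max_degree n E) ^ 2 * (4 * real \<beta> / ?D)\<^sup>2 * (Ymax n E \<beta> c)\<^sup>2 / real n"
    by (intro divide_right_mono mult_right_mono mult_left_mono) auto
  also have "\<dots> = 64 * (real (max_degree n E) ^ 2 * real \<beta> ^ 2 / real n * (Ymax n E \<beta> c)\<^sup>2
      / delta_p p \<beta> ^ (2 * \<beta>))"
    by (simp add: power_divide power_mult_distrib power_mult[symmetric] mult.commute)
  finally show ?thesis
    using integral_sq_est_treat_le by linarith
qed

context
  fixes \<sigma> :: real
  assumes \<sigma>_nonneg: "\<sigma> \<ge> 0"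
begin

abbreviation W :: "(nat \<times> nat \<Rightarrow> real) measure" where
  "W \<equiv> PiM ({..<n} \<times> {..\<beta>}) (\<lambda>_. noise_dist \<sigma>)"

lemma prob_space_W: "prob_space W"
  using noise_dist_moments(1)[OF \<sigma>_nonneg] by (simp add: prob_space_PiM)

lemma
  shows integrable_est_noise: "integrable W est_noise"
    and integral_est_noise: "(\<integral>e. est_noise e \<partial>W) = 0"
    and integrable_sq_est_noise: "integrable W (\<lambda>e. (est_noise e)\<^sup>2)"
    and integral_sq_est_noise:
      "(\<integral>e. (est_noise e)\<^sup>2 \<partial>W) = \<sigma>\<^sup>2 * (\<Sum>t\<le>\<beta>. (pi_weight p \<beta> t)\<^sup>2) / real n"
proof -
  have fin: "finite ({..<n} \<times> {..\<beta>})"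
    by simp
  note lin_comb = integrable_PiM_lin_comb integral_PiM_lin_comb
    integrable_PiM_lin_comb_sq integral_PiM_lin_comb_sq
  note lin_comb = lin_comb[OF noise_dist_moments(1)[OF \<sigma>_nonneg] fin noise_dist_moments(2,3)[OF \<sigma>_nonneg],
    where w="\<lambda>k. pi_weight p \<beta> (snd k) / real n", folded est_noise_def]
  show "integrable W est_noise" "(\<integral>e. est_noise e \<partial>W) = 0"
    "integrable W (\<lambda>e. (est_noise e)\<^sup>2)"
    using lin_comb(1-3) by simp_all
  have "(\<Sum>i<n. \<Sum>t\<le>\<beta>. (pi_weight p \<beta> t / real n)\<^sup>2)
      = (\<Sum>k\<in>{..<n} \<times> {..\<beta>}. (pi_weight p \<beta> (snd k) / real n)\<^sup>2)"
    unfolding sum.cartesian_product by (rule sum.cong) auto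
  then have "(\<Sum>k\<in>{..<n} \<times> {..\<beta>}. (pi_weight p \<beta> (snd k) / real n)\<^sup>2)
      = real n * ((\<Sum>t\<le>\<beta>. (pi_weight p \<beta> t)\<^sup>2) / (real n)\<^sup>2)"
    by (simp add: power_divide sum_divide_distrib)
  also have "\<dots> = (\<Sum>t\<le>\<beta>. (pi_weight p \<beta> t)\<^sup>2) / real n"
    using n_pos by (simp add: power2_eq_square)
  finally show "(\<integral>e. (est_noise e)\<^sup>2 \<partial>W) = \<sigma>\<^sup>2 * (\<Sum>t\<le>\<beta>. (pi_weight p \<beta> t)\<^sup>2) / real n"
    using lin_comb(4) by simp
qed

lemma integral_sq_est_noise_le_delta_p:
  "(\<integral>e. (est_noise e)\<^sup>2 \<partial>W)
     \<le> 8 * (\<sigma>\<^sup>2 * real \<beta> / real n / delta_p p \<beta> ^ (2 * \<beta>))"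
proof -
  have "\<sigma>\<^sup>2 * (\<Sum>t\<le>\<beta>. (pi_weight p \<beta> t)\<^sup>2) / real n
      \<le> \<sigma>\<^sup>2 * (8 * real \<beta> / delta_p p \<beta> ^ (2 * \<beta>)) / real n"
    using sum_sq_pi_weight_le by (intro divide_right_mono mult_left_mono) auto
  then show ?thesis
    by (simp add: integral_sq_est_noise mult_ac)
qed

lemma design_measure_eq: "design_measure n \<beta> \<sigma> = U \<Otimes>\<^sub>M W"
  unfolding design_measure_def ..

lemma
  shows integrable_est_PI: "integrable (design_measure n \<beta> \<sigma>) (est_PI n E \<beta> c p)"
    and integral_est_PI: "(\<integral>\<omega>. est_PI n E \<beta> c p \<omega> \<partial>design_measure n \<beta> \<sigma>) = TTE n E \<beta> c"
proof -
  have "est_treat \<in> borel_measurable U" "est_noise \<in> borel_measurable W"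
    using integrable_est_treat integrable_est_noise by auto
  note pair = integral_pair_fst[OF prob_space_W this(1)] integrable_pair_fst_iff[OF prob_space_W this(1)]
    integral_pair_snd[OF prob_space_U prob_space_W this(2)]
    integrable_pair_snd_iff[OF prob_space_U prob_space_W this(2)]
  show "integrable (design_measure n \<beta> \<sigma>) (est_PI n E \<beta> c p)"
    unfolding design_measure_eq est_PI_split[abs_def]
    using pair integrable_est_treat integrable_est_noise by simp
  show "(\<integral>\<omega>. est_PI n E \<beta> c p \<omega> \<partial>design_measure n \<beta> \<sigma>) = TTE n E \<beta> c"
    unfolding design_measure_eq est_PI_split
    using pair integrable_est_treat integrable_est_noise integral_est_treat integral_est_noise by simp
qed

lemma integral_sq_est_PI_le:
  "(\<integral>\<omega>. (est_PI n E \<beta> c p \<omega> - TTE n E \<beta> c)\<^sup>2 \<partial>design_measure n \<beta> \<sigma>)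
    \<le> 128 * (real (max_degree n E) ^ 2 * real \<beta> ^ 2 / real n * (Ymax n E \<beta> c)\<^sup>2
                / delta_p p \<beta> ^ (2 * \<beta>) + \<sigma>\<^sup>2 * real \<beta> / real n / delta_p p \<beta> ^ (2 * \<beta>))"
proof -
  have combine: "v \<le> 128 * (X + Y)"
    if "v \<le> 2 * a + 2 * b" "a \<le> 64 * X" "b \<le> 8 * Y" "0 \<le> Y" for v a b X Y :: real
    using that by (simp add: algebra_simps)
  have "est_treat \<in> borel_measurable U" "est_noise \<in> borel_measurable W"
    using integrable_est_treat integrable_est_noise by auto
  then have "(\<integral>\<omega>. (est_PI n E \<beta> c p \<omega> - TTE n E \<beta> c)\<^sup>2 \<partial>design_measure n \<beta> \<sigma>)
      \<le> 2 * (\<integral>u. (est_treat u - TTE n E \<beta> c)\<^sup>2 \<partial>U) + 2 * (\<integral>e. (est_noise e)\<^sup>2 \<partial>W)"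
    using integral_sq_pair_sum_le[OF prob_space_U prob_space_W _ integrable_sq_est_treat _
        integrable_sq_est_noise]
    unfolding design_measure_eq est_PI_split by (simp add: algebra_simps)
  moreover have "0 \<le> \<sigma>\<^sup>2 * real \<beta> / real n / delta_p p \<beta> ^ (2 * \<beta>)"
    unfolding power_mult by simp
  ultimately show ?thesis
    using integral_sq_est_treat_le_delta_p integral_sq_est_noise_le_delta_p by (intro combine)
qed

end

end

theorem theorem1:
  shows "\<exists>C::real. \<forall>(n::nat) (E::(nat \<times> nat) set) (\<beta>::nat) (p::nat \<Rightarrow> real)
            (c::nat \<Rightarrow> nat set \<Rightarrow> real) (\<sigma>::real).
     n > 0 \<and> E \<subseteq> {..<n} \<times> {..<n} \<and> \<sigma> \<ge> 0 \<and>
     p 0 = 0 \<and> (\<forall>t<\<beta>. p t < p (Suc t)) \<and> p \<beta> \<le> 1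
     \<longrightarrow>
     (let M = design_measure n \<beta> \<sigma>;
          X = est_PI n E \<beta> c p;
          \<Delta> = delta_p p \<beta>;
          d = max_degree n E
      in integrable M X \<and>
         (LINT \<omega>|M. X \<omega>) = TTE n E \<beta> c \<and>
         (LINT \<omega>|M. (X \<omega> - (LINT \<omega>'|M. X \<omega>'))\<^sup>2) \<le>
           C * (real d ^ 2 * real \<beta> ^ 2 / real n * (Ymax n E \<beta> c)\<^sup>2 / \<Delta> ^ (2 * \<beta>)
                + \<sigma>\<^sup>2 * real \<beta> / real n / \<Delta> ^ (2 * \<beta>)))"
  apply (intro exI[of _ 128] allI impI)
  subgoal premises hyps for n E \<beta> p c \<sigma>
  proof -
    interpret rollout_model p \<beta> n E c
      using hyps by unfold_locales auto
    show ?thesis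
      using integrable_est_PI integral_est_PI integral_sq_est_PI_le hyps unfolding Let_def by simp
  qed
  done

end
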